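(* Let $k\ge 1$ and let $\Gamma\subset\mathbb{R}_+^k$ be a nonempty compact set of possible allocations. Let $X$ be a random valuation with values in $\mathbb{R}_+^k$ and finite expectation, i.e., $\mathbb{E}[\|X\|]<\infty$. Then there exists an incentive compatible and individually rational $\Gamma$-mechanism $\mu=(q,s)$ such that $R(\mu;X)=\textsc{Rev}_\Gamma(X)$.
   Context: A $\Gamma$-mechanism $\mu=(q,s)$ consists of an allocation function $q:\mathbb{R}_+^k\to\Gamma$ and a payment function $s:\mathbb{R}_+^k\to\mathbb{R}$. It is incentive compatible (IC) if $q(x)\cdot x-s(x)\ge q(y)\cdot x-s(y)$ for all $x,y\in\mathbb{R}_+^k$, and individually rational (IR) if $q(x)\cdot x-s(x)\ge 0$ for all $x\in\mathbb{R}_+^k$. The revenue of $\mu$ from $X$ is $R(\mu;X):=\mathbb{E}[s(X)]$, and $\textsc{Rev}_\Gamma(X):=\sup_\mu R(\mu;X)$, the supremum over all IC and IR $\Gamma$-mechanisms. *)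

theory Defs
  imports "HOL-Analysis.Analysis" "HOL-Probability.Probability"
begin

definition orthant :: "(real^'k) set" where
  "orthant = {x. \<forall>i. 0 \<le> x $ i}"

definition IC :: "(real^'k \<Rightarrow> real^'k) \<Rightarrow> (real^'k \<Rightarrow> real) \<Rightarrow> bool" where
  "IC q s \<longleftrightarrow> (\<forall>x\<in>orthant. \<forall>y\<in>orthant. q x \<bullet> x - s x \<ge> q y \<bullet> x - s y)"

definition IR :: "(real^'k \<Rightarrow> real^'k) \<Rightarrow> (real^'k \<Rightarrow> real) \<Rightarrow> bool" where
  "IR q s \<longleftrightarrow> (\<forall>x\<in>orthant. q x \<bullet> x - s x \<ge> 0)"

text \<open>A Gamma-mechanism: allocations lie in Gamma; the payment is Borel measurable
  so that its expectation is meaningful.\<close>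
definition mechanism :: "(real^'k) set \<Rightarrow> (real^'k \<Rightarrow> real^'k) \<Rightarrow> (real^'k \<Rightarrow> real) \<Rightarrow> bool" where
  "mechanism \<Gamma> q s \<longleftrightarrow> (\<forall>x\<in>orthant. q x \<in> \<Gamma>) \<and> s \<in> borel_measurable borel"

definition revenue :: "'a measure \<Rightarrow> ('a \<Rightarrow> real^'k) \<Rightarrow> (real^'k \<Rightarrow> real) \<Rightarrow> real" where
  "revenue M X s = (\<integral>\<omega>. s (X \<omega>) \<partial>M)"

definition Rev :: "(real^'k) set \<Rightarrow> 'a measure \<Rightarrow> ('a \<Rightarrow> real^'k) \<Rightarrow> ereal" where
  "Rev \<Gamma> M X = (SUP qs \<in> {(q, s). mechanism \<Gamma> q s \<and> IC q s \<and> IR q s}.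
                   ereal (revenue M X (snd qs)))"

end

theory Submission
  imports Defs "HOL-Library.Diagonal_Subsequence"
begin

text \<open>Shifting payments so that the zero type pays nothing never lowers revenue; afterwards
  payments lie in [0, C |x|] and utilities are nonnegative, C-Lipschitz and bounded by C |x|,
  where C bounds the allocations. Take such mechanisms with revenues tending to the (finite)
  supremum. A diagonal argument over a countable dense set, together with equicontinuity, makes
  a subsequence of the utilities converge pointwise to some U. Let S be the pointwise limsup of
  the payments. At each type x, a further subsequence along which the payment tends to S x and
  the allocation converges in the compact set \<Gamma> gives an allocation g with
  g \<bullet> x = S x + U x that is a subgradient of U at x; the resulting mechanism is incentive
  compatible and individually rational. By the reverse Fatou lemma, dominated by C |X|, its
  revenue is at least the supremum.\<close>

section \<open>Pointwise compactness of equi-Lipschitz sequences\<close>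

lemma countable_dense_subset:
  fixes S :: "'a::second_countable_topology set"
  obtains D where "countable D" "D \<subseteq> S" "S \<subseteq> closure D"
proof -
  obtain B :: "'a set set" where B: "countable B" "topological_basis B"
    using ex_countable_basis by blast
  define c where "c V = (SOME x. x \<in> V \<inter> S)" for V
  define D where "D = c ` {V \<in> B. V \<inter> S \<noteq> {}}"
  have c: "c V \<in> V \<inter> S" if "V \<inter> S \<noteq> {}" for V
    unfolding c_def by (rule someI_ex) (use that in blast)
  have "x \<in> closure D" if "x \<in> S" for x
  proof (rule ccontr)
    assume "x \<notin> closure D"
    then obtain V where V: "V \<in> B" "x \<in> V" "V \<subseteq> - closure D"
      using B(2) by (meson ComplI closed_closure open_Compl topological_basisE)
    then have "c V \<in> D" "c V \<notin> closure D"
      using c[of V] \<open>x \<in> S\<close> unfolding D_def by auto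
    then show False
      using closure_subset by blast
  qed
  moreover have "countable D" "D \<subseteq> S"
    using B(1) c unfolding D_def by auto
  ultimately show ?thesis using that by blast
qed

lemma bounded_pointwise_convergent_subseq_countable:
  fixes f :: "nat \<Rightarrow> 'a \<Rightarrow> 'b::heine_borel"
  assumes "countable D" and bounded: "\<And>d. d \<in> D \<Longrightarrow> bounded (range (\<lambda>n. f n d))"
  obtains r where "strict_mono r" "\<And>d. d \<in> D \<Longrightarrow> convergent (\<lambda>n. f (r n) d)"
proof (cases "D = {}")
  case True
  then show ?thesis using that[of id] by (simp add: strict_mono_id)
next
  case False
  define e where "e = from_nat_into D"
  have range_e: "range e = D"
    unfolding e_def using False \<open>countable D\<close> by (simp add: range_from_nat_into)
  interpret subseqs "\<lambda>n s. convergent (\<lambda>k. f (s k) (e n))"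
  proof unfold_locales
    fix n and s :: "nat \<Rightarrow> nat" assume "strict_mono s"
    have "bounded (range (\<lambda>k. f (s k) (e n)))"
      by (rule bounded_subset[OF bounded[of "e n"]]) (use range_e in auto)
    then obtain l r where "strict_mono (r :: nat \<Rightarrow> nat)" "((\<lambda>k. f (s k) (e n)) \<circ> r) \<longlonglongrightarrow> l"
      using bounded_imp_convergent_subsequence by blast
    then show "\<exists>r. strict_mono r \<and> convergent (\<lambda>k. f ((s \<circ> r) k) (e n))"
      by (auto simp: convergent_def comp_def)
  qed
  have "convergent (\<lambda>k. f (diagseq k) (e n))" for n
  proof -
    have "convergent (\<lambda>k. f ((diagseq \<circ> (+) (Suc n)) k) (e n))"
    proof (rule diagseq_holds)
      fix r s :: "nat \<Rightarrow> nat" and m assume "strict_mono r" "convergent (\<lambda>k. f (s k) (e m))"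
      then show "convergent (\<lambda>k. f ((s \<circ> r) k) (e m))"
        using convergent_subseq_convergent by (fastforce simp: comp_def)
    qed
    then obtain L where "(\<lambda>k. f (diagseq (k + Suc n)) (e n)) \<longlonglongrightarrow> L"
      by (auto simp: convergent_def comp_def add.commute)
    then show ?thesis
      unfolding convergent_def by (blast intro: LIMSEQ_offset)
  qed
  then show ?thesis
    using that[OF subseq_diagseq] range_e by auto
qed

lemma convergent_closure_equi_lipschitz:
  fixes f :: "nat \<Rightarrow> 'a::metric_space \<Rightarrow> 'b::complete_space"
  assumes lipschitz: "\<And>n x y. x \<in> S \<Longrightarrow> y \<in> S \<Longrightarrow> dist (f n x) (f n y) \<le> C * dist x y"
    and "D \<subseteq> S" and convergent: "\<And>d. d \<in> D \<Longrightarrow> convergent (\<lambda>n. f n d)"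
    and "x \<in> S" "x \<in> closure D"
  shows "convergent (\<lambda>n. f n x)"
  unfolding Cauchy_convergent_iff[symmetric]
proof (rule metric_CauchyI)
  fix \<epsilon> :: real assume "0 < \<epsilon>"
  define \<delta> where "\<delta> = \<epsilon> / (3 * (\<bar>C\<bar> + 1))"
  have "0 < \<delta>" using \<open>0 < \<epsilon>\<close> by (simp add: \<delta>_def)
  then obtain d where "d \<in> D" "dist d x < \<delta>"
    using \<open>x \<in> closure D\<close> closure_approachable by blast
  have near: "dist (f n x) (f n d) < \<epsilon> / 3" for n
  proof -
    have "dist (f n x) (f n d) \<le> C * dist x d"
      using lipschitz \<open>x \<in> S\<close> \<open>d \<in> D\<close> \<open>D \<subseteq> S\<close> by blast
    also have "\<dots> \<le> \<bar>C\<bar> * \<delta>"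
      using \<open>dist d x < \<delta>\<close>
      by (metis abs_ge_self abs_ge_zero dist_commute less_imp_le mult_mono zero_le_dist)
    also have "\<dots> < \<epsilon> / 3"
      using \<open>0 < \<epsilon>\<close> by (simp add: \<delta>_def field_simps)
    finally show ?thesis .
  qed
  obtain N where N: "\<And>m n. N \<le> m \<Longrightarrow> N \<le> n \<Longrightarrow> dist (f m d) (f n d) < \<epsilon> / 3"
    using metric_CauchyD[OF convergent_Cauchy[OF convergent[OF \<open>d \<in> D\<close>]], of "\<epsilon> / 3"]
      \<open>0 < \<epsilon>\<close> by auto
  have "dist (f m x) (f n x) < \<epsilon>" if "N \<le> m" "N \<le> n" for m n
    using dist_triangle[of "f m x" "f n x" "f m d"] dist_triangle[of "f m d" "f n x" "f n d"]
      near[of m] near[of n] N[OF that] by (simp add: dist_commute)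
  then show "\<exists>N. \<forall>m\<ge>N. \<forall>n\<ge>N. dist (f m x) (f n x) < \<epsilon>" by blast
qed

lemma equi_lipschitz_pointwise_convergent_subseq:
  fixes f :: "nat \<Rightarrow> 'a::{metric_space, second_countable_topology} \<Rightarrow> 'b::heine_borel"
  assumes bounded: "\<And>x. x \<in> S \<Longrightarrow> bounded (range (\<lambda>n. f n x))"
    and lipschitz: "\<And>n x y. x \<in> S \<Longrightarrow> y \<in> S \<Longrightarrow> dist (f n x) (f n y) \<le> C * dist x y"
  obtains r where "strict_mono r" "\<And>x. x \<in> S \<Longrightarrow> convergent (\<lambda>n. f (r n) x)"
proof -
  obtain D where D: "countable D" "D \<subseteq> S" "S \<subseteq> closure D"
    using countable_dense_subset by blast
  obtain r where "strict_mono r" "\<And>d. d \<in> D \<Longrightarrow> convergent (\<lambda>n. f (r n) d)"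
    using bounded_pointwise_convergent_subseq_countable[OF D(1), of f] bounded D(2) by blast
  moreover have "convergent (\<lambda>n. f (r n) x)" if "x \<in> S" for x
    by (rule convergent_closure_equi_lipschitz[of S _ C D])
       (use lipschitz D calculation that in auto)
  ultimately show ?thesis using that by blast
qed

section \<open>Incentive compatible mechanisms\<close>

definition admissible :: "(real^'k) set \<Rightarrow> (real^'k \<Rightarrow> real^'k) \<Rightarrow> (real^'k \<Rightarrow> real) \<Rightarrow> bool" where
  "admissible \<Gamma> q s \<longleftrightarrow> mechanism \<Gamma> q s \<and> IC q s \<and> IR q s"

definition utility :: "(real^'k \<Rightarrow> real^'k) \<Rightarrow> (real^'k \<Rightarrow> real) \<Rightarrow> real^'k \<Rightarrow> real" where
  "utility q s x = q x \<bullet> x - s x"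

lemma zero_in_orthant [simp]: "0 \<in> orthant"
  by (simp add: orthant_def)

lemma inner_nonneg_orthant: "x \<in> orthant \<Longrightarrow> y \<in> orthant \<Longrightarrow> 0 \<le> x \<bullet> y"
  by (auto simp: orthant_def inner_vec_def intro!: sum_nonneg)

lemma inner_le_norm_bound: "norm g \<le> C \<Longrightarrow> g \<bullet> x \<le> C * norm x"
  by (metis norm_cauchy_schwarz mult_right_mono norm_ge_zero order_trans)

lemma IC_utility_subgradient:
  assumes "IC q s" "x \<in> orthant" "y \<in> orthant"
  shows "utility q s x + q x \<bullet> (y - x) \<le> utility q s y"
  using assms by (auto simp: IC_def utility_def inner_diff_right)

lemma IC_utility_lipschitz:
  assumes "IC q s" "x \<in> orthant" "y \<in> orthant"
    and bound: "\<And>z. z \<in> orthant \<Longrightarrow> norm (q z) \<le> C"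
  shows "dist (utility q s x) (utility q s y) \<le> C * dist x y"
proof -
  have inner_bound: "\<bar>q z \<bullet> (w - z)\<bar> \<le> C * dist x y"
    if "z \<in> orthant" "norm (w - z) = dist x y" for z w
    using Cauchy_Schwarz_ineq2[of "q z" "w - z"] that
      mult_right_mono[OF bound[OF that(1)] norm_ge_zero[of "w - z"]] by (metis order.trans)
  show ?thesis
    using IC_utility_subgradient[OF assms(1-3)] IC_utility_subgradient[OF assms(1,3,2)]
      inner_bound[of x y] inner_bound[of y x] assms(2,3)
    unfolding dist_real_def by (auto simp: dist_norm norm_minus_commute)
qed

lemma IC_payment_ge_payment_zero:
  assumes "IC q s" "x \<in> orthant"
  shows "s 0 \<le> s x"
proof -
  have "q x \<bullet> 0 - s x \<le> q 0 \<bullet> 0 - s 0"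
    using assms zero_in_orthant unfolding IC_def by blast
  then show ?thesis by simp
qed

lemma admissible_payment_le:
  assumes "admissible \<Gamma> q s" "\<forall>g\<in>\<Gamma>. norm g \<le> C" "x \<in> orthant"
  shows "s x \<le> C * norm x"
proof -
  have "s x \<le> q x \<bullet> x"
    using assms by (simp add: admissible_def IR_def)
  also have "\<dots> \<le> C * norm x"
    using assms by (auto simp: admissible_def mechanism_def intro: inner_le_norm_bound)
  finally show ?thesis .
qed

lemma normalized_admissible_bounds:
  assumes "admissible \<Gamma> q s" "s 0 = 0" "\<forall>g\<in>\<Gamma>. norm g \<le> C" "x \<in> orthant"
  shows "0 \<le> s x" "s x \<le> C * norm x" "0 \<le> utility q s x" "utility q s x \<le> C * norm x"
proof -
  show "0 \<le> s x"
    using assms IC_payment_ge_payment_zero by (fastforce simp: admissible_def)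
  moreover have "q x \<bullet> x \<le> C * norm x"
    using assms by (auto simp: admissible_def mechanism_def intro: inner_le_norm_bound)
  ultimately show "utility q s x \<le> C * norm x"
    by (simp add: utility_def)
  show "s x \<le> C * norm x"
    using admissible_payment_le assms by blast
  show "0 \<le> utility q s x"
    using assms by (simp add: admissible_def IR_def utility_def)
qed

lemma admissible_normalize:
  assumes "admissible \<Gamma> q s" "\<Gamma> \<subseteq> orthant"
  shows "admissible \<Gamma> q (\<lambda>x. s x - s 0)" "s 0 \<le> 0"
proof -
  have IR: "q x \<bullet> x - s x + s 0 \<ge> 0" if "x \<in> orthant" for x
  proof -
    have "q 0 \<bullet> x \<ge> 0"
      using assms that by (auto simp: admissible_def mechanism_def intro!: inner_nonneg_orthant)
    moreover have "q x \<bullet> x - s x \<ge> q 0 \<bullet> x - s 0"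
      using assms(1) that by (auto simp: admissible_def IC_def)
    ultimately show ?thesis by linarith
  qed
  then show "admissible \<Gamma> q (\<lambda>x. s x - s 0)"
    using assms(1) unfolding admissible_def mechanism_def IC_def IR_def
    by (auto simp: algebra_simps)
  show "s 0 \<le> 0"
    using assms(1) zero_in_orthant unfolding admissible_def IR_def by fastforce
qed

text \<open>The converse half of Rochet's characterisation of incentive compatibility.\<close>
lemma admissible_of_subgradient:
  assumes mech: "mechanism \<Gamma> q s"
    and U: "\<And>x. x \<in> orthant \<Longrightarrow> 0 \<le> U x \<and> q x \<bullet> x = s x + U x"
    and subgradient: "\<And>x y. x \<in> orthant \<Longrightarrow> y \<in> orthant \<Longrightarrow> U x + q x \<bullet> (y - x) \<le> U y"
  shows "admissible \<Gamma> q s"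
  unfolding admissible_def IC_def IR_def
  using mech U subgradient by (fastforce simp: inner_diff_right)

lemma subgradient_limit_allocation:
  assumes "compact \<Gamma>"
    and IC: "\<And>n. IC (Q n) (P n)" and alloc: "\<And>n x. x \<in> orthant \<Longrightarrow> Q n x \<in> \<Gamma>"
    and U: "\<And>y. y \<in> orthant \<Longrightarrow> (\<lambda>n. utility (Q n) (P n) y) \<longlonglongrightarrow> U y"
    and x: "x \<in> orthant" and "strict_mono \<phi>" and "(\<lambda>j. P (\<phi> j) x) \<longlonglongrightarrow> \<sigma>"
  shows "\<exists>g\<in>\<Gamma>. g \<bullet> x = \<sigma> + U x \<and> (\<forall>y\<in>orthant. U x + g \<bullet> (y - x) \<le> U y)"
proof -
  have "\<forall>j. Q (\<phi> j) x \<in> \<Gamma>"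
    using alloc[OF x] by blast
  then obtain g \<psi> where "g \<in> \<Gamma>" "strict_mono \<psi>" and "((\<lambda>j. Q (\<phi> j) x) \<circ> \<psi>) \<longlonglongrightarrow> g"
    by (rule seq_compactE[OF compact_imp_seq_compact[OF \<open>compact \<Gamma>\<close>]])
  define k where "k = \<phi> \<circ> \<psi>"
  have "strict_mono k"
    unfolding k_def using \<open>strict_mono \<phi>\<close> \<open>strict_mono \<psi>\<close> by (rule strict_mono_o)
  have Qk: "(\<lambda>j. Q (k j) x) \<longlonglongrightarrow> g"
    using \<open>((\<lambda>j. Q (\<phi> j) x) \<circ> \<psi>) \<longlonglongrightarrow> g\<close> by (simp add: k_def comp_def)
  have Pk: "(\<lambda>j. P (k j) x) \<longlonglongrightarrow> \<sigma>"
    using LIMSEQ_subseq_LIMSEQ[OF \<open>(\<lambda>j. P (\<phi> j) x) \<longlonglongrightarrow> \<sigma>\<close> \<open>strict_mono \<psi>\<close>]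
    by (simp add: k_def comp_def)
  have Uk: "(\<lambda>j. utility (Q (k j)) (P (k j)) y) \<longlonglongrightarrow> U y" if "y \<in> orthant" for y
    using LIMSEQ_subseq_LIMSEQ[OF U[OF that] \<open>strict_mono k\<close>] by (simp add: comp_def)
  have "(\<lambda>j. Q (k j) x \<bullet> x) \<longlonglongrightarrow> g \<bullet> x"
    using Qk by (intro tendsto_intros)
  moreover have "(\<lambda>j. Q (k j) x \<bullet> x) \<longlonglongrightarrow> \<sigma> + U x"
    using tendsto_add[OF Pk Uk[OF x]] by (simp add: utility_def)
  ultimately have "g \<bullet> x = \<sigma> + U x"
    by (rule LIMSEQ_unique)
  moreover have "U x + g \<bullet> (y - x) \<le> U y" if "y \<in> orthant" for y
  proof (rule LIMSEQ_le)
    show "(\<lambda>j. utility (Q (k j)) (P (k j)) x + Q (k j) x \<bullet> (y - x)) \<longlonglongrightarrow> U x + g \<bullet> (y - x)"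
      using Uk[OF x] Qk by (intro tendsto_intros)
    show "\<exists>N. \<forall>j\<ge>N. utility (Q (k j)) (P (k j)) x + Q (k j) x \<bullet> (y - x)
        \<le> utility (Q (k j)) (P (k j)) y"
      using IC_utility_subgradient[OF IC x that] by blast
  qed (rule Uk[OF that])
  ultimately show ?thesis
    using \<open>g \<in> \<Gamma>\<close> by blast
qed

lemma normalized_utilities_convergent_subseq:
  fixes Q :: "nat \<Rightarrow> real^'k \<Rightarrow> real^'k" and P :: "nat \<Rightarrow> real^'k \<Rightarrow> real"
  assumes "compact \<Gamma>"
    and admissible: "\<And>n. admissible \<Gamma> (Q n) (P n)" and normalized: "\<And>n. P n 0 = 0"
  obtains r where "strict_mono r"
    "\<And>x. x \<in> orthant \<Longrightarrow> convergent (\<lambda>n. utility (Q (r n)) (P (r n)) x)"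
proof -
  obtain C where C: "\<forall>g\<in>\<Gamma>. norm g \<le> C"
    using compact_imp_bounded[OF \<open>compact \<Gamma>\<close>] by (auto simp: bounded_iff)
  have "bounded (range (\<lambda>n. utility (Q n) (P n) x))" if "x \<in> orthant" for x
    unfolding bounded_iff using normalized_admissible_bounds[OF admissible normalized C that]
    by (intro exI[of _ "C * norm x"]) auto
  moreover have "dist (utility (Q n) (P n) x) (utility (Q n) (P n) y) \<le> C * dist x y"
    if "x \<in> orthant" "y \<in> orthant" for n x y
    using admissible[of n] that C by (intro IC_utility_lipschitz) (auto simp: admissible_def mechanism_def)
  ultimately show ?thesis
    using equi_lipschitz_pointwise_convergent_subseq[of orthant "\<lambda>n. utility (Q n) (P n)" C] that
    by blast
qed

lemma limsup_payment_subgradient: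
  assumes "compact \<Gamma>"
    and admissible: "\<And>n. admissible \<Gamma> (Q n) (P n)" and normalized: "\<And>n. P n 0 = 0"
    and U: "\<And>y. y \<in> orthant \<Longrightarrow> (\<lambda>n. utility (Q n) (P n) y) \<longlonglongrightarrow> U y"
    and x: "x \<in> orthant"
  shows "\<exists>g\<in>\<Gamma>. g \<bullet> x = enn2real (limsup (\<lambda>n. ennreal (P n x))) + U x
    \<and> (\<forall>y\<in>orthant. U x + g \<bullet> (y - x) \<le> U y)"
proof -
  obtain C where C: "\<forall>g\<in>\<Gamma>. norm g \<le> C"
    using compact_imp_bounded[OF \<open>compact \<Gamma>\<close>] by (auto simp: bounded_iff)
  note bounds = normalized_admissible_bounds[OF admissible normalized C x]
  obtain \<phi> where "strict_mono \<phi>"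
    and \<phi>: "(\<lambda>j. ennreal (P (\<phi> j) x)) \<longlonglongrightarrow> limsup (\<lambda>n. ennreal (P n x))"
    using limsup_subseq_lim[of "\<lambda>n. ennreal (P n x)"] by (auto simp: comp_def)
  have "limsup (\<lambda>n. ennreal (P n x)) \<le> ennreal (C * norm x)"
    using bounds(2) by (intro Limsup_bounded always_eventually) (auto intro: ennreal_leI)
  then have "limsup (\<lambda>n. ennreal (P n x)) < top"
    using ennreal_less_top le_less_trans by blast
  then have "(\<lambda>j. P (\<phi> j) x) \<longlonglongrightarrow> enn2real (limsup (\<lambda>n. ennreal (P n x)))"
    using \<phi> bounds(1) by (intro tendsto_ennrealD) auto
  then show ?thesis
    using subgradient_limit_allocation[OF \<open>compact \<Gamma>\<close> _ _ U x \<open>strict_mono \<phi>\<close>] admissible x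
    by (auto simp: admissible_def mechanism_def)
qed

lemma limsup_payment_mechanism:
  fixes Q :: "nat \<Rightarrow> real^'k \<Rightarrow> real^'k" and P :: "nat \<Rightarrow> real^'k \<Rightarrow> real"
  assumes "compact \<Gamma>"
    and admissible: "\<And>n. admissible \<Gamma> (Q n) (P n)" and normalized: "\<And>n. P n 0 = 0"
  obtains r q S where "strict_mono r" "admissible \<Gamma> q S"
    "\<And>x. x \<in> orthant \<Longrightarrow> S x = enn2real (limsup (\<lambda>n. ennreal (P (r n) x)))"
proof -
  obtain r where "strict_mono r"
    and convergent: "\<And>x. x \<in> orthant \<Longrightarrow> convergent (\<lambda>n. utility (Q (r n)) (P (r n)) x)"
    using normalized_utilities_convergent_subseq[where Q = Q and P = P, OF assms] by blast
  define U where "U x = lim (\<lambda>n. utility (Q (r n)) (P (r n)) x)" for x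
  have U: "(\<lambda>n. utility (Q (r n)) (P (r n)) x) \<longlonglongrightarrow> U x" if "x \<in> orthant" for x
    using convergent[OF that] by (simp add: U_def convergent_LIMSEQ_iff)
  define S where "S x = enn2real (limsup (\<lambda>n. ennreal (P (r n) x)))" for x
  have "\<forall>x\<in>orthant. \<exists>g.
      g \<in> \<Gamma> \<and> g \<bullet> x = S x + U x \<and> (\<forall>y\<in>orthant. U x + g \<bullet> (y - x) \<le> U y)"
    using limsup_payment_subgradient[where Q = "\<lambda>n. Q (r n)" and P = "\<lambda>n. P (r n)",
        OF \<open>compact \<Gamma>\<close> admissible normalized U]
    unfolding S_def by blast
  then obtain q where q: "\<forall>x\<in>orthant.
      q x \<in> \<Gamma> \<and> q x \<bullet> x = S x + U x \<and> (\<forall>y\<in>orthant. U x + q x \<bullet> (y - x) \<le> U y)"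
    by (rule bchoice[THEN exE])
  have [measurable]: "P n \<in> borel_measurable borel" for n
    using admissible[of n] by (simp add: admissible_def mechanism_def)
  have "S \<in> borel_measurable borel"
    unfolding S_def by measurable
  moreover have "0 \<le> U x" if "x \<in> orthant" for x
    using admissible that
    by (intro LIMSEQ_le_const[OF U[OF that]]) (auto simp: admissible_def IR_def utility_def)
  ultimately have "admissible \<Gamma> q S"
    using q by (intro admissible_of_subgradient[where U = U]) (auto simp: mechanism_def)
  with \<open>strict_mono r\<close> show ?thesis
    by (rule that) (simp add: S_def)
qed

section \<open>Revenue\<close>

lemma revenue_le_Rev: "admissible \<Gamma> q s \<Longrightarrow> ereal (revenue M X s) \<le> Rev \<Gamma> M X"
  unfolding Rev_def admissible_def by (rule SUP_upper2[of "(q, s)"]) auto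

lemma admissible_revenue_le:
  assumes "admissible \<Gamma> q s" "\<forall>g\<in>\<Gamma>. norm g \<le> C" "0 \<le> C"
    and "\<And>\<omega>. \<omega> \<in> space M \<Longrightarrow> X \<omega> \<in> orthant" "integrable M (\<lambda>\<omega>. norm (X \<omega>))"
  shows "revenue M X s \<le> C * (\<integral>\<omega>. norm (X \<omega>) \<partial>M)"
proof (cases "integrable M (\<lambda>\<omega>. s (X \<omega>))")
  case True
  then have "revenue M X s \<le> (\<integral>\<omega>. C * norm (X \<omega>) \<partial>M)"
    unfolding revenue_def using assms by (intro integral_mono) (auto intro: admissible_payment_le)
  then show ?thesis by simp
next
  case False
  then show ?thesis
    using assms(3) by (simp add: revenue_def not_integrable_integral_eq)
qed

lemma Rev_finite:
  assumes "\<Gamma> \<subseteq> orthant" "\<Gamma> \<noteq> {}" "compact \<Gamma>"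
    and "\<And>\<omega>. \<omega> \<in> space M \<Longrightarrow> X \<omega> \<in> orthant" "integrable M (\<lambda>\<omega>. norm (X \<omega>))"
  obtains R where "Rev \<Gamma> M X = ereal R"
proof -
  obtain C where C: "0 \<le> C" "\<forall>g\<in>\<Gamma>. norm g \<le> C"
    using compact_imp_bounded[OF \<open>compact \<Gamma>\<close>] by (meson bounded_pos less_imp_le)
  obtain g where "g \<in> \<Gamma>"
    using \<open>\<Gamma> \<noteq> {}\<close> by blast
  then have "admissible \<Gamma> (\<lambda>_. g) (\<lambda>_. 0)"
    using assms(1) by (auto simp: admissible_def mechanism_def IC_def IR_def intro: inner_nonneg_orthant)
  then have "ereal 0 \<le> Rev \<Gamma> M X"
    using revenue_le_Rev by (fastforce simp: revenue_def)
  moreover have "Rev \<Gamma> M X \<le> ereal (C * (\<integral>\<omega>. norm (X \<omega>) \<partial>M))"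
    unfolding Rev_def using admissible_revenue_le[OF _ C(2,1) assms(4,5)]
    by (intro SUP_least) (auto simp: admissible_def)
  ultimately show ?thesis
    using that by (cases "Rev \<Gamma> M X") auto
qed

context prob_space
begin

lemma revenue_normalize_ge:
  assumes "s 0 \<le> 0"
  shows "revenue M X s \<le> revenue M X (\<lambda>x. s x - s 0)"
proof (cases "integrable M (\<lambda>\<omega>. s (X \<omega>))")
  case True
  then have "revenue M X (\<lambda>x. s x - s 0) = revenue M X s - s 0"
    by (simp add: revenue_def prob_space)
  then show ?thesis
    using assms by simp
next
  case False
  have "integrable M (\<lambda>\<omega>. s (X \<omega>))" if "integrable M (\<lambda>\<omega>. s (X \<omega>) - s 0)"
    using Bochner_Integration.integrable_add[OF that integrable_const[of "s 0"]] by simp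
  with False have "\<not> integrable M (\<lambda>\<omega>. s (X \<omega>) - s 0)"
    by blast
  then show ?thesis
    using False by (simp add: revenue_def not_integrable_integral_eq)
qed

lemma maximizing_sequence:
  assumes "\<Gamma> \<subseteq> orthant" "Rev \<Gamma> M X = ereal R"
  obtains Q P where "\<And>n. admissible \<Gamma> (Q n) (P n)" "\<And>n. P n 0 = 0"
    "(\<lambda>n. revenue M X (P n)) \<longlonglongrightarrow> R"
proof -
  have "\<exists>m. admissible \<Gamma> (fst m) (snd m) \<and> snd m 0 = 0
      \<and> R - inverse (real (Suc n)) < revenue M X (snd m)" for n
  proof -
    have "ereal (R - inverse (real (Suc n))) < Rev \<Gamma> M X"
      using assms(2) by simp
    then obtain q s where "admissible \<Gamma> q s" "R - inverse (real (Suc n)) < revenue M X s"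
      unfolding Rev_def less_SUP_iff admissible_def by auto
    then show ?thesis
      using admissible_normalize[OF _ assms(1)] revenue_normalize_ge
      by (intro exI[of _ "(q, \<lambda>x. s x - s 0)"]) (fastforce intro: less_le_trans)
  qed
  then obtain m where m: "\<And>n. admissible \<Gamma> (fst (m n)) (snd (m n))" "\<And>n. snd (m n) 0 = 0"
    and lower: "\<And>n. R - inverse (real (Suc n)) < revenue M X (snd (m n))"
    by metis
  have upper: "revenue M X (snd (m n)) \<le> R" for n
    using revenue_le_Rev[OF m(1), where M = M and X = X] assms(2) by simp
  have "(\<lambda>n. revenue M X (snd (m n))) \<longlonglongrightarrow> R"
  proof (rule tendsto_sandwich[of "\<lambda>n. R - inverse (real (Suc n))" _ _ "\<lambda>_. R"])
    show "(\<lambda>n. R - inverse (real (Suc n))) \<longlonglongrightarrow> R"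
      using tendsto_diff[OF tendsto_const LIMSEQ_inverse_real_of_nat, of R] by simp
  qed (use lower upper in \<open>auto intro: always_eventually less_imp_le\<close>)
  then show ?thesis
    using that[of "\<lambda>n. fst (m n)" "\<lambda>n. snd (m n)"] m by blast
qed

end

text \<open>Reverse Fatou lemma.\<close>
lemma revenue_limsup_ge:
  assumes [measurable]: "X \<in> borel_measurable M"
    and X: "\<And>\<omega>. \<omega> \<in> space M \<Longrightarrow> X \<omega> \<in> orthant"
    and [measurable]: "\<And>n. P n \<in> borel_measurable borel" "w \<in> borel_measurable borel"
      "S \<in> borel_measurable borel"
    and bounds: "\<And>n x. x \<in> orthant \<Longrightarrow> 0 \<le> P n x \<and> P n x \<le> w x"
    and "integrable M (\<lambda>\<omega>. w (X \<omega>))"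
    and S: "\<And>x. x \<in> orthant \<Longrightarrow> S x = enn2real (limsup (\<lambda>n. ennreal (P n x)))"
    and "(\<lambda>n. revenue M X (P n)) \<longlonglongrightarrow> R"
  shows "R \<le> revenue M X S"
proof -
  have limsup_le: "limsup (\<lambda>n. ennreal (P n x)) \<le> ennreal (w x)" if "x \<in> orthant" for x
    using bounds[OF that] by (intro Limsup_bounded always_eventually) (auto intro: ennreal_leI)
  then have ennreal_S: "ennreal (S x) = limsup (\<lambda>n. ennreal (P n x))" if "x \<in> orthant" for x
    using S[OF that] limsup_le[OF that] ennreal_less_top le_less_trans
    by (metis ennreal_enn2real)
  have S_bounds: "0 \<le> S x \<and> S x \<le> w x" if "x \<in> orthant" for x
    using S[OF that] limsup_le[OF that] bounds[OF that]
    by (metis enn2real_ennreal enn2real_mono enn2real_nonneg ennreal_less_top order.trans)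
  have integrable: "integrable M (\<lambda>\<omega>. f (X \<omega>))"
    if "f \<in> borel_measurable borel" "\<And>x. x \<in> orthant \<Longrightarrow> 0 \<le> f x \<and> f x \<le> w x" for f
    using that X by (intro Bochner_Integration.integrable_bound[OF \<open>integrable M _\<close>])
      (auto intro!: AE_I2 intro: order.trans[OF _ abs_ge_self])
  have nn_integral_revenue: "(\<integral>\<^sup>+\<omega>. ennreal (f (X \<omega>)) \<partial>M) = ennreal (revenue M X f)"
    if "f \<in> borel_measurable borel" "\<And>x. x \<in> orthant \<Longrightarrow> 0 \<le> f x \<and> f x \<le> w x" for f
    unfolding revenue_def using integrable[OF that] that(2) X
    by (intro nn_integral_eq_integral) (auto intro!: AE_I2)
  have "(\<lambda>n. ennreal (revenue M X (P n))) \<longlonglongrightarrow> ennreal R"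
    using \<open>(\<lambda>n. revenue M X (P n)) \<longlonglongrightarrow> R\<close> by (rule tendsto_ennrealI)
  then have "ennreal R = limsup (\<lambda>n. \<integral>\<^sup>+\<omega>. ennreal (P n (X \<omega>)) \<partial>M)"
    using nn_integral_revenue[of "P _"] bounds by (simp add: lim_imp_Limsup)
  also have "\<dots> \<le> (\<integral>\<^sup>+\<omega>. limsup (\<lambda>n. ennreal (P n (X \<omega>))) \<partial>M)"
  proof (rule nn_integral_limsup[where w = "\<lambda>\<omega>. ennreal (w (X \<omega>))"])
    show "AE \<omega> in M. ennreal (P n (X \<omega>)) \<le> ennreal (w (X \<omega>))" for n
      using bounds X by (auto intro!: AE_I2 ennreal_leI)
    show "(\<integral>\<^sup>+\<omega>. ennreal (w (X \<omega>)) \<partial>M) < \<infinity>"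
      using nn_integral_revenue[of w] bounds by (fastforce intro: order.trans)
  qed measurable
  also have "\<dots> = (\<integral>\<^sup>+\<omega>. ennreal (S (X \<omega>)) \<partial>M)"
    using X ennreal_S by (intro nn_integral_cong) simp
  also have "\<dots> = ennreal (revenue M X S)"
    using nn_integral_revenue S_bounds by simp
  finally show ?thesis
    using S_bounds X by (cases "0 \<le> R") (auto simp: revenue_def intro!: integral_nonneg_AE AE_I2)
qed

theorem theorem1:
  fixes \<Gamma> :: "(real^'k) set" and M :: "'a measure" and X :: "'a \<Rightarrow> real^'k"
  assumes "\<Gamma> \<subseteq> orthant" and "\<Gamma> \<noteq> {}" and "compact \<Gamma>"
    and "prob_space M"
    and "X \<in> borel_measurable M"
    and "\<forall>\<omega>\<in>space M. X \<omega> \<in> orthant"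
    and "integrable M (\<lambda>\<omega>. norm (X \<omega>))"
  shows "\<exists>q s. mechanism \<Gamma> q s \<and> IC q s \<and> IR q s \<and> ereal (revenue M X s) = Rev \<Gamma> M X"
proof -
  interpret prob_space M by fact
  obtain C where C: "\<forall>g\<in>\<Gamma>. norm g \<le> C"
    using compact_imp_bounded[OF \<open>compact \<Gamma>\<close>] by (auto simp: bounded_iff)
  obtain R where R: "Rev \<Gamma> M X = ereal R"
    by (rule Rev_finite[OF assms(1-3) _ assms(7)]) (use assms(6) in auto)
  obtain Q P where QP: "\<And>n. admissible \<Gamma> (Q n) (P n)" "\<And>n. P n 0 = 0"
    and "(\<lambda>n. revenue M X (P n)) \<longlonglongrightarrow> R"
    using maximizing_sequence[OF assms(1) R] by blast
  obtain r q S where "strict_mono r" and admissible: "admissible \<Gamma> q S"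
    and S: "\<And>x. x \<in> orthant \<Longrightarrow> S x = enn2real (limsup (\<lambda>n. ennreal (P (r n) x)))"
    using limsup_payment_mechanism[where Q = Q and P = P, OF assms(3) QP] by blast
  have "R \<le> revenue M X S"
  proof (rule revenue_limsup_ge[where P = "\<lambda>n. P (r n)" and w = "\<lambda>x. C * norm x"])
    show "(\<lambda>n. revenue M X (P (r n))) \<longlonglongrightarrow> R"
      using LIMSEQ_subseq_LIMSEQ[OF \<open>(\<lambda>n. revenue M X (P n)) \<longlonglongrightarrow> R\<close> \<open>strict_mono r\<close>]
      by (simp add: comp_def)
    show "0 \<le> P (r n) x \<and> P (r n) x \<le> C * norm x" if "x \<in> orthant" for n x
      using normalized_admissible_bounds[OF QP C that] by simp
    show "(\<lambda>x. C * norm x) \<in> borel_measurable borel"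
      by measurable
  qed (use assms(5-7) QP(1) admissible S in \<open>auto simp: admissible_def mechanism_def\<close>)
  moreover have "revenue M X S \<le> R"
    using revenue_le_Rev[OF admissible, where M = M and X = X] R by simp
  ultimately show ?thesis
    using admissible R unfolding admissible_def by auto
qed

end
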